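(* For every odd integer $m\ge 9$ and every odd integer $\Delta\ge m$, there exists an $m$-$\gamma_t$-critical graph $G$ of order $\Delta+m$ with $\Delta(G)=\Delta$ and $\delta(G)\ge 2$.
   Context: All graphs are finite and simple; $\Delta(G)$, $\delta(G)$ are maximum and minimum degree. A set $S\subseteq V(G)$ is a total dominating set if every vertex of $G$ is adjacent to some vertex of $S$; $\gamma_t(G)$ is the minimum size of such a set. A leaf is a vertex of degree one. A graph $G$ with no isolated vertex is $\gamma_t$-critical if for every vertex $v$ not adjacent to a leaf, $\gamma_t(G-v)<\gamma_t(G)$; it is $m$-$\gamma_t$-critical if moreover $\gamma_t(G)=m$. *)

theory Defs
  imports Main
begin

definition simple_graph :: "'a set \<Rightarrow> ('a \<Rightarrow> 'a \<Rightarrow> bool) \<Rightarrow> bool" where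
  "simple_graph V E \<longleftrightarrow> finite V \<and>
     (\<forall>u v. E u v \<longrightarrow> u \<in> V \<and> v \<in> V \<and> u \<noteq> v) \<and>
     (\<forall>u v. E u v \<longrightarrow> E v u)"

definition degree :: "'a set \<Rightarrow> ('a \<Rightarrow> 'a \<Rightarrow> bool) \<Rightarrow> 'a \<Rightarrow> nat" where
  "degree V E v = card {u \<in> V. E v u}"

definition max_degree :: "'a set \<Rightarrow> ('a \<Rightarrow> 'a \<Rightarrow> bool) \<Rightarrow> nat" where
  "max_degree V E = Max (degree V E ` V)"

definition min_degree :: "'a set \<Rightarrow> ('a \<Rightarrow> 'a \<Rightarrow> bool) \<Rightarrow> nat" where
  "min_degree V E = Min (degree V E ` V)"

definition is_leaf :: "'a set \<Rightarrow> ('a \<Rightarrow> 'a \<Rightarrow> bool) \<Rightarrow> 'a \<Rightarrow> bool" where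
  "is_leaf V E v \<longleftrightarrow> v \<in> V \<and> degree V E v = 1"

definition no_isolated :: "'a set \<Rightarrow> ('a \<Rightarrow> 'a \<Rightarrow> bool) \<Rightarrow> bool" where
  "no_isolated V E \<longleftrightarrow> (\<forall>v \<in> V. \<exists>u. E v u)"

definition total_dominating :: "'a set \<Rightarrow> ('a \<Rightarrow> 'a \<Rightarrow> bool) \<Rightarrow> 'a set \<Rightarrow> bool" where
  "total_dominating V E S \<longleftrightarrow> S \<subseteq> V \<and> (\<forall>v \<in> V. \<exists>u \<in> S. E v u)"

definition gamma_t :: "'a set \<Rightarrow> ('a \<Rightarrow> 'a \<Rightarrow> bool) \<Rightarrow> nat" where
  "gamma_t V E = Min (card ` {S. total_dominating V E S})"

definition del_vertex_edges :: "('a \<Rightarrow> 'a \<Rightarrow> bool) \<Rightarrow> 'a \<Rightarrow> 'a \<Rightarrow> 'a \<Rightarrow> bool" where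
  "del_vertex_edges E v = (\<lambda>x y. E x y \<and> x \<noteq> v \<and> y \<noteq> v)"

definition gamma_t_critical :: "'a set \<Rightarrow> ('a \<Rightarrow> 'a \<Rightarrow> bool) \<Rightarrow> bool" where
  "gamma_t_critical V E \<longleftrightarrow> no_isolated V E \<and>
     (\<forall>v \<in> V. \<not> (\<exists>u. E v u \<and> is_leaf V E u) \<longrightarrow>
        gamma_t (V - {v}) (del_vertex_edges E v) < gamma_t V E)"

definition m_gamma_t_critical :: "nat \<Rightarrow> 'a set \<Rightarrow> ('a \<Rightarrow> 'a \<Rightarrow> bool) \<Rightarrow> bool" where
  "m_gamma_t_critical m V E \<longleftrightarrow> gamma_t_critical V E \<and> gamma_t V E = m"

end

theory Submission
  imports Defs "HOL-Library.Countable"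
begin

(* For odd m >= 9 and odd Delta >= m we exhibit an m-gamma_t-critical graph of order Delta + m,
   maximum degree Delta and minimum degree >= 2.  Writing m = 9 + 2s and Delta = 7 + 2a + 2s
   (s >= 0, a >= 1), the graph G(a,s) has a hub of degree Delta and a set of 8 + 2s "anchor"
   vertices whose open neighbourhoods are pairwise disjoint.

   Anchors give gamma_t >= 8 + 2s; a case analysis shows that a
   total dominating set of exactly that size cannot exist, so gamma_t = 9 + 2s.  For every vertex v
   an explicit exchange of a few anchors yields a total dominating set of G - v of size at most
   8 + 2s, hence G is vertex-critical. *)

lemma finite_tds_cards:
  assumes "finite V"
  shows "finite (card ` {S. total_dominating V E S})"
proof -
  have "{S. total_dominating V E S} \<subseteq> Pow V" by (auto simp: total_dominating_def)
  then show ?thesis using assms by (meson finite_Pow_iff finite_imageI finite_subset)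
qed

lemma gamma_t_le:
  assumes "finite V" "total_dominating V E T"
  shows "gamma_t V E \<le> card T"
  unfolding gamma_t_def using assms by (intro Min_le) (auto simp: finite_tds_cards)

lemma gamma_t_eqI:
  assumes "finite V" "total_dominating V E T" "card T = k"
    and "\<And>S. total_dominating V E S \<Longrightarrow> k \<le> card S"
  shows "gamma_t V E = k"
  unfolding gamma_t_def using assms by (intro Min_eqI) (auto simp: finite_tds_cards)

definition disjoint_nbhds :: "'a set \<Rightarrow> ('a \<Rightarrow> 'a \<Rightarrow> bool) \<Rightarrow> bool" where
  "disjoint_nbhds B E \<longleftrightarrow> (\<forall>b\<in>B. \<forall>b'\<in>B. \<forall>z. E b z \<longrightarrow> E b' z \<longrightarrow> b = b')"

lemma disjoint_nbhds_dominators: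
  assumes "total_dominating V E S" "B \<subseteq> V" "disjoint_nbhds B E"
  obtains g where "inj_on g B" "g ` B \<subseteq> S" "\<And>b. b \<in> B \<Longrightarrow> E b (g b)"
proof -
  have "\<forall>b\<in>B. \<exists>z\<in>S. E b z" using assms(1,2) by (auto simp: total_dominating_def)
  then obtain g where g: "\<And>b. b \<in> B \<Longrightarrow> g b \<in> S \<and> E b (g b)" by metis
  have "inj_on g B"
    using g assms(3) by (intro inj_onI) (metis disjoint_nbhds_def)
  with g show ?thesis using that by blast
qed

(* If S is no larger than B, the dominators of B exhaust S: every vertex of S is adjacent to
   some vertex of B, and each vertex of B has exactly one neighbour in S. *)
lemma disjoint_nbhds_tight:
  assumes "finite V" "total_dominating V E S" "B \<subseteq> V" "disjoint_nbhds B E"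
    and "card S \<le> card B"
  shows "\<forall>z\<in>S. \<exists>b\<in>B. E b z"
    and "\<forall>b\<in>B. \<forall>z\<in>S. \<forall>z'\<in>S. E b z \<longrightarrow> E b z' \<longrightarrow> z = z'"
proof -
  obtain g where g: "inj_on g B" "g ` B \<subseteq> S" "\<And>b. b \<in> B \<Longrightarrow> E b (g b)"
    using disjoint_nbhds_dominators[OF assms(2-4)] by metis
  have "finite S" using assms(1,2) finite_subset by (auto simp: total_dominating_def)
  moreover have "card (g ` B) = card B" using card_image[OF g(1)] .
  ultimately have img: "g ` B = S" using card_subset_eq[OF _ g(2)] assms(5) card_mono[OF _ g(2)] by simp
  show "\<forall>z\<in>S. \<exists>b\<in>B. E b z" using img g(3) by auto
  show "\<forall>b\<in>B. \<forall>z\<in>S. \<forall>z'\<in>S. E b z \<longrightarrow> E b z' \<longrightarrow> z = z'"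
    using img g(3) assms(4) unfolding disjoint_nbhds_def by blast
qed

lemma degree_le_card:
  assumes "finite A" "\<And>u. u \<in> V \<Longrightarrow> E v u \<Longrightarrow> u \<in> A"
  shows "degree V E v \<le> card A"
  unfolding degree_def using assms by (intro card_mono) auto

lemma degree_le_four:
  assumes "\<And>u. u \<in> V \<Longrightarrow> E v u \<Longrightarrow> u \<in> {x1, x2, x3, x4}"
  shows "degree V E v \<le> 4"
proof -
  have "card {x1, x2, x3, x4} \<le> 4" by (simp add: card_insert_le_m1)
  then show ?thesis using degree_le_card[of "{x1, x2, x3, x4}" V E v] assms by simp
qed

lemma two_le_degree:
  assumes "finite V" "x \<in> V" "y \<in> V" "x \<noteq> y" "E v x" "E v y"
  shows "2 \<le> degree V E v"
proof -
  have "card {x, y} \<le> card {u \<in> V. E v u}" by (rule card_mono) (use assms in auto)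
  then show ?thesis using assms(4) by (simp add: degree_def)
qed

lemma total_dominating_del_vertex:
  "total_dominating (V - {v}) (del_vertex_edges E v) T \<longleftrightarrow>
     T \<subseteq> V - {v} \<and> (\<forall>z \<in> V - {v}. \<exists>t\<in>T. E z t)"
  by (auto simp: total_dominating_def del_vertex_edges_def)

lemma card_exchange_le:
  assumes "finite B" "K \<subseteq> B" "card L \<le> card K"
  shows "card (L \<union> (B - K)) \<le> card B"
proof -
  have "card (L \<union> (B - K)) \<le> card L + card (B - K)" by (rule card_Un_le)
  also have "\<dots> = card L + (card B - card K)"
    using card_Diff_subset[OF finite_subset[OF assms(2,1)] assms(2)] by simp
  also have "\<dots> \<le> card B" using assms card_mono by fastforce
  finally show ?thesis .
qed

definition vertex_critical :: "'a set \<Rightarrow> ('a \<Rightarrow> 'a \<Rightarrow> bool) \<Rightarrow> bool" where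
  "vertex_critical V E \<longleftrightarrow> no_isolated V E \<and>
     (\<forall>v \<in> V. gamma_t (V - {v}) (del_vertex_edges E v) < gamma_t V E)"

lemma vertex_critical_gamma_t_critical:
  "vertex_critical V E \<Longrightarrow> gamma_t_critical V E"
  by (simp add: vertex_critical_def gamma_t_critical_def)

lemma no_isolated_if_min_degree:
  assumes "finite V" "1 \<le> min_degree V E"
  shows "no_isolated V E"
  unfolding no_isolated_def
proof
  fix v assume "v \<in> V"
  then have "min_degree V E \<le> degree V E v" unfolding min_degree_def using assms(1) by simp
  then have "0 < card {u \<in> V. E v u}" using assms(2) by (simp add: degree_def)
  then have "{u \<in> V. E v u} \<noteq> {}" by (simp add: card_gt_0_iff)
  then show "\<exists>u. E v u" by blast
qed

definition relabel :: "('a \<Rightarrow> 'b) \<Rightarrow> ('a \<Rightarrow> 'a \<Rightarrow> bool) \<Rightarrow> 'b \<Rightarrow> 'b \<Rightarrow> bool" where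
  "relabel f E x y \<longleftrightarrow> (\<exists>a b. x = f a \<and> y = f b \<and> E a b)"

lemma relabel_image: "inj f \<Longrightarrow> relabel f E (f a) (f b) = E a b"
  by (auto simp: relabel_def inj_eq)

lemma relabel_del_vertex:
  "inj f \<Longrightarrow> del_vertex_edges (relabel f E) (f v) = relabel f (del_vertex_edges E v)"
  by (auto simp: del_vertex_edges_def relabel_def inj_eq fun_eq_iff)

lemma relabel_simple_graph:
  assumes "inj f" "simple_graph V E"
  shows "simple_graph (f ` V) (relabel f E)"
proof -
  have "x \<in> f ` V \<and> y \<in> f ` V \<and> x \<noteq> y \<and> relabel f E y x" if xy: "relabel f E x y" for x y
  proof -
    obtain u v where "x = f u" "y = f v" "E u v" using xy unfolding relabel_def by blast
    then show ?thesis using assms by (auto simp: simple_graph_def inj_eq relabel_def)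
  qed
  then show ?thesis using assms(2) by (simp add: simple_graph_def)
qed

lemma relabel_total_dominating:
  "inj f \<Longrightarrow> total_dominating (f ` V) (relabel f E) (f ` S) \<longleftrightarrow> total_dominating V E S"
  unfolding total_dominating_def by (auto simp: relabel_image inj_image_subset_iff)

lemma relabel_degree:
  assumes "inj f"
  shows "degree (f ` V) (relabel f E) (f v) = degree V E v"
proof -
  have "{u \<in> f ` V. relabel f E (f v) u} = f ` {u \<in> V. E v u}"
    using relabel_image[OF assms] by auto
  then show ?thesis
    unfolding degree_def using card_image[OF inj_on_subset[OF assms subset_UNIV]] by simp
qed

lemma relabel_degrees:
  "inj f \<Longrightarrow> degree (f ` V) (relabel f E) ` (f ` V) = degree V E ` V"
  by (auto simp: relabel_degree image_iff)

lemma relabel_gamma_t: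
  assumes "inj f"
  shows "gamma_t (f ` V) (relabel f E) = gamma_t V E"
proof -
  have "{S'. total_dominating (f ` V) (relabel f E) S'} = (`) f ` {S. total_dominating V E S}"
  proof (intro equalityI subsetI)
    fix S' assume S': "S' \<in> {S'. total_dominating (f ` V) (relabel f E) S'}"
    then have "S' \<subseteq> f ` V" by (simp add: total_dominating_def)
    then have "S' = f ` (f -` S')" by blast
    with S' show "S' \<in> (`) f ` {S. total_dominating V E S}"
      using relabel_total_dominating[OF assms] by (metis image_eqI mem_Collect_eq)
  qed (use relabel_total_dominating[OF assms] in auto)
  moreover have "card (f ` S) = card S" for S
    using card_image[OF inj_on_subset[OF assms subset_UNIV]] .
  ultimately show ?thesis unfolding gamma_t_def by (simp add: image_image)
qed

lemma relabel_vertex_critical: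
  assumes "inj f" "vertex_critical V E"
  shows "vertex_critical (f ` V) (relabel f E)"
  unfolding vertex_critical_def
proof (intro conjI ballI)
  show "no_isolated (f ` V) (relabel f E)"
    using assms(2) unfolding vertex_critical_def no_isolated_def relabel_def by blast
  fix x assume "x \<in> f ` V"
  then obtain v where v: "v \<in> V" "x = f v" by blast
  have "f ` V - {x} = f ` (V - {v})" using v assms(1) by (auto simp: inj_eq)
  then show "gamma_t (f ` V - {x}) (del_vertex_edges (relabel f E) x) < gamma_t (f ` V) (relabel f E)"
    using assms v by (simp add: relabel_del_vertex relabel_gamma_t vertex_critical_def)
qed

lemma nat_copy:
  fixes V :: "'a::countable set"
  assumes "simple_graph V E" "vertex_critical V E"
  obtains V' :: "nat set" and E' where "simple_graph V' E'" "vertex_critical V' E'"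
    "gamma_t V' E' = gamma_t V E" "card V' = card V"
    "max_degree V' E' = max_degree V E" "min_degree V' E' = min_degree V E"
proof
  have inj: "inj (to_nat :: 'a \<Rightarrow> nat)" by simp
  show "simple_graph (to_nat ` V) (relabel to_nat E)" using relabel_simple_graph[OF inj assms(1)] .
  show "vertex_critical (to_nat ` V) (relabel to_nat E)" using relabel_vertex_critical[OF inj assms(2)] .
  show "gamma_t (to_nat ` V) (relabel to_nat E) = gamma_t V E" using relabel_gamma_t[OF inj] .
  show "card (to_nat ` V) = card V" using card_image[OF inj_on_subset[OF inj subset_UNIV]] .
  show "max_degree (to_nat ` V) (relabel to_nat E) = max_degree V E"
    unfolding max_degree_def relabel_degrees[OF inj] ..
  show "min_degree (to_nat ` V) (relabel to_nat E) = min_degree V E"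
    unfolding min_degree_def relabel_degrees[OF inj] ..
qed

(* Each index j carries a path P j - U j - W j - Q j; similarly X1, X2 - Ua -
   Wa - Y0, and Ub - Wb with Ub adjacent to every Pb i and Wb to every Qb i.  Y0 is adjacent to all
   Pb i, Qb i, the Pb i and Qb j form a complete bipartite graph minus a perfect matching, and X1,
   X2 are joined to P 0, Q 0 and P 1, Q 1 respectively. *)
datatype vtx = Hub | X1 | X2 | Y0 | Ua | Wa | Ub | Wb | Pb nat | Qb nat | U nat | W nat | P nat | Q nat

instance vtx :: countable by countable_datatype

definition vert :: "nat \<Rightarrow> nat \<Rightarrow> vtx set" where
  "vert a s = {Hub, X1, X2, Y0, Ua, Wa, Ub, Wb} \<union> Pb ` {..<a} \<union> Qb ` {..<a}
     \<union> U ` {..<s+2} \<union> W ` {..<s+2} \<union> P ` {..<s+2} \<union> Q ` {..<s+2}"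

definition arc :: "nat \<Rightarrow> nat \<Rightarrow> vtx \<Rightarrow> vtx \<Rightarrow> bool" where
  "arc a s x y \<longleftrightarrow>
     (x = Hub \<and> (y = X1 \<or> y = X2 \<or> y = Y0 \<or> (\<exists>i<a. y = Pb i \<or> y = Qb i) \<or> (\<exists>j<s+2. y = P j \<or> y = Q j)))
   \<or> (x = Ua \<and> (y = Wa \<or> y = X1 \<or> y = X2))
   \<or> (x = Wa \<and> y = Y0)
   \<or> (x = Ub \<and> (y = Wb \<or> (\<exists>i<a. y = Pb i)))
   \<or> (x = Wb \<and> (\<exists>i<a. y = Qb i))
   \<or> (x = Y0 \<and> (\<exists>i<a. y = Pb i \<or> y = Qb i))
   \<or> (\<exists>i<a. \<exists>j<a. i \<noteq> j \<and> x = Pb i \<and> y = Qb j)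
   \<or> (\<exists>j<s+2. x = U j \<and> (y = W j \<or> y = P j))
   \<or> (\<exists>j<s+2. x = W j \<and> y = Q j)
   \<or> (x = X1 \<and> (y = P 0 \<or> y = Q 0))
   \<or> (x = X2 \<and> (y = P 1 \<or> y = Q 1))"

definition adj :: "nat \<Rightarrow> nat \<Rightarrow> vtx \<Rightarrow> vtx \<Rightarrow> bool" where
  "adj a s x y \<longleftrightarrow> arc a s x y \<or> arc a s y x"

lemma mem_vert:
  "x \<in> vert a s \<longleftrightarrow> (case x of Pb i \<Rightarrow> i < a | Qb i \<Rightarrow> i < a | U j \<Rightarrow> j < s+2
     | W j \<Rightarrow> j < s+2 | P j \<Rightarrow> j < s+2 | Q j \<Rightarrow> j < s+2 | _ \<Rightarrow> True)"
  by (cases x) (auto simp: vert_def)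

lemma ball_vert:
  "(\<forall>z \<in> vert a s. R z) \<longleftrightarrow> R Hub \<and> R X1 \<and> R X2 \<and> R Y0 \<and> R Ua \<and> R Wa \<and> R Ub \<and> R Wb
     \<and> (\<forall>i<a. R (Pb i) \<and> R (Qb i)) \<and> (\<forall>j<s+2. R (U j) \<and> R (W j) \<and> R (P j) \<and> R (Q j))"
  by (auto simp: vert_def)

lemma adj_Hub: "adj a s Hub y \<longleftrightarrow> y = X1 \<or> y = X2 \<or> y = Y0 \<or> (\<exists>i<a. y = Pb i \<or> y = Qb i) \<or> (\<exists>j<s+2. y = P j \<or> y = Q j)"
  and adj_X1: "adj a s X1 y \<longleftrightarrow> y = Hub \<or> y = Ua \<or> y = P 0 \<or> y = Q 0"
  and adj_X2: "adj a s X2 y \<longleftrightarrow> y = Hub \<or> y = Ua \<or> y = P 1 \<or> y = Q 1"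
  and adj_Y0: "adj a s Y0 y \<longleftrightarrow> y = Hub \<or> y = Wa \<or> (\<exists>i<a. y = Pb i \<or> y = Qb i)"
  and adj_Ua: "adj a s Ua y \<longleftrightarrow> y = Wa \<or> y = X1 \<or> y = X2"
  and adj_Wa: "adj a s Wa y \<longleftrightarrow> y = Ua \<or> y = Y0"
  and adj_Ub: "adj a s Ub y \<longleftrightarrow> y = Wb \<or> (\<exists>i<a. y = Pb i)"
  and adj_Wb: "adj a s Wb y \<longleftrightarrow> y = Ub \<or> (\<exists>i<a. y = Qb i)"
  and adj_Pb: "adj a s (Pb i) y \<longleftrightarrow> i < a \<and> (y = Hub \<or> y = Ub \<or> y = Y0 \<or> (\<exists>j<a. j \<noteq> i \<and> y = Qb j))"
  and adj_Qb: "adj a s (Qb i) y \<longleftrightarrow> i < a \<and> (y = Hub \<or> y = Wb \<or> y = Y0 \<or> (\<exists>j<a. j \<noteq> i \<and> y = Pb j))"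
  and adj_U: "adj a s (U j) y \<longleftrightarrow> j < s+2 \<and> (y = W j \<or> y = P j)"
  and adj_W: "adj a s (W j) y \<longleftrightarrow> j < s+2 \<and> (y = U j \<or> y = Q j)"
  and adj_P: "adj a s (P j) y \<longleftrightarrow> j < s+2 \<and> (y = Hub \<or> y = U j \<or> (j = 0 \<and> y = X1) \<or> (j = 1 \<and> y = X2))"
  and adj_Q: "adj a s (Q j) y \<longleftrightarrow> j < s+2 \<and> (y = Hub \<or> y = W j \<or> (j = 0 \<and> y = X1) \<or> (j = 1 \<and> y = X2))"
  by (auto simp: adj_def arc_def)

lemmas adj_simps = adj_Hub adj_X1 adj_X2 adj_Y0 adj_Ua adj_Wa adj_Ub adj_Wb adj_Pb adj_Qb adj_U adj_W adj_P adj_Q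

lemma simple_graph_G: "simple_graph (vert a s) (adj a s)"
proof -
  have "x \<in> vert a s \<and> y \<in> vert a s \<and> x \<noteq> y" if "adj a s x y" for x y
    using that by (cases x) (auto simp: adj_simps mem_vert)
  then show ?thesis by (auto simp: simple_graph_def vert_def adj_def)
qed

lemma card_vert: "card (vert a s) = 16 + 2*a + 4*s"
  unfolding vert_def
  apply (simp add: card_insert_if image_iff)
  apply (subst card_Un_disjoint, simp, simp, blast)+
  apply (simp add: card_image inj_on_def)
  done

definition anchors :: "nat \<Rightarrow> vtx set" where
  "anchors s = {Ua, Wa, Ub, Wb} \<union> U ` {..<s+2} \<union> W ` {..<s+2}"

lemma finite_anchors: "finite (anchors s)"
  by (simp add: anchors_def)

lemma card_anchors: "card (anchors s) = 8 + 2*s"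
  unfolding anchors_def
  apply (simp add: card_insert_if image_iff)
  apply (subst card_Un_disjoint, simp, simp, blast)+
  apply (simp add: card_image inj_on_def)
  done

lemma anchors_subset: "anchors s \<subseteq> vert a s"
  by (auto simp: anchors_def vert_def)

lemma anchors_disjoint_nbhds: "disjoint_nbhds (anchors s) (adj a s)"
  by (auto simp: disjoint_nbhds_def anchors_def adj_simps)

(* A total dominating set of size 8 + 2s would be "tight": it avoids the hub and every anchor
   has a unique neighbour in it.  The next lemmas show, in turn, that no such set exists. *)
definition tight :: "nat \<Rightarrow> nat \<Rightarrow> vtx set \<Rightarrow> bool" where
  "tight a s S \<longleftrightarrow> total_dominating (vert a s) (adj a s) S \<and> Hub \<notin> S \<and>
     (\<forall>b\<in>anchors s. \<forall>z\<in>S. \<forall>z'\<in>S. adj a s b z \<longrightarrow> adj a s b z' \<longrightarrow> z = z')"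

lemma tight_dominates:
  "tight a s S \<Longrightarrow> v \<in> vert a s \<Longrightarrow> \<exists>u\<in>S. adj a s v u"
  by (auto simp: tight_def total_dominating_def)

lemma tight_unique:
  "tight a s S \<Longrightarrow> b \<in> anchors s \<Longrightarrow> z \<in> S \<Longrightarrow> z' \<in> S \<Longrightarrow> adj a s b z \<Longrightarrow> adj a s b z' \<Longrightarrow> z = z'"
  by (auto simp: tight_def)

(* A path P j - U j - W j - Q j whose ends cannot be dominated through X1, X2 forces U j, W j into
   S, and then neither end can lie in S without giving U j or W j two neighbours in S. *)
lemma tight_gadget_free:
  assumes S: "tight a s S" and j: "j < s+2"
    and "X1 \<in> S \<Longrightarrow> j \<noteq> 0" and "X2 \<in> S \<Longrightarrow> j \<noteq> 1"
  shows "P j \<notin> S \<and> Q j \<notin> S"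
proof -
  have "U j \<in> S"
    using tight_dominates[OF S, of "P j"] S assms j by (auto simp: mem_vert adj_simps tight_def)
  moreover have "W j \<in> S"
    using tight_dominates[OF S, of "Q j"] S assms j by (auto simp: mem_vert adj_simps tight_def)
  ultimately show ?thesis
    using tight_unique[OF S, of "U j" "W j" "P j"] tight_unique[OF S, of "W j" "U j" "Q j"] j
    by (auto simp: anchors_def adj_simps)
qed

(* Without Y0, a vertex Pb i in S would give Ub two neighbours in S (similarly Qb i and Wb). *)
lemma tight_pairs_free:
  assumes S: "tight a s S" and Y0: "Y0 \<notin> S" and i: "i < a"
  shows "Pb i \<notin> S \<and> Qb i \<notin> S"
proof (intro conjI notI)
  assume Pi: "Pb i \<in> S"
  obtain u where u: "u \<in> S" "adj a s (Qb i) u"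
    using tight_dominates[OF S, of "Qb i"] i by (auto simp: mem_vert)
  then have "adj a s Ub u \<and> u \<noteq> Pb i" using S Y0 by (auto simp: adj_simps tight_def)
  then show False using tight_unique[OF S, of Ub u "Pb i"] u Pi i by (auto simp: anchors_def adj_simps)
next
  assume Qi: "Qb i \<in> S"
  obtain u where u: "u \<in> S" "adj a s (Pb i) u"
    using tight_dominates[OF S, of "Pb i"] i by (auto simp: mem_vert)
  then have "adj a s Wb u \<and> u \<noteq> Qb i" using S Y0 by (auto simp: adj_simps tight_def)
  then show False using tight_unique[OF S, of Wb u "Qb i"] u Qi i by (auto simp: anchors_def adj_simps)
qed

(* If X1 or X2 lies in S, then Y0 must be dominated by Wa, and Ua sees two vertices of S. *)
lemma tight_Y0_if_X:
  assumes S: "tight a s S" and X: "X1 \<in> S \<or> X2 \<in> S"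
  shows "Y0 \<in> S"
proof (rule ccontr)
  assume Y0: "Y0 \<notin> S"
  obtain u where u: "u \<in> S" "adj a s Y0 u"
    using tight_dominates[OF S, of Y0] by (auto simp: mem_vert)
  then have "u = Wa" using S tight_pairs_free[OF S Y0] by (auto simp: adj_simps tight_def)
  then show False
    using X u tight_unique[OF S, of Ua Wa X1] tight_unique[OF S, of Ua Wa X2]
    by (auto simp: anchors_def adj_simps)
qed

(* If Y0 lies in S then Ua does not, so X1 and X2 must both lie in S, again overloading Ua. *)
lemma tight_Y0_free:
  assumes S: "tight a s S"
  shows "Y0 \<notin> S"
proof
  assume Y0: "Y0 \<in> S"
  have Ua: "Ua \<notin> S" using tight_unique[OF S, of Wa Ua Y0] Y0 by (auto simp: anchors_def adj_simps)
  have X1: "X1 \<in> S"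
  proof (rule ccontr)
    assume "X1 \<notin> S"
    then show False
      using tight_dominates[OF S, of X1] tight_gadget_free[OF S, of 0] S Ua
      by (auto simp: mem_vert adj_simps tight_def)
  qed
  have X2: "X2 \<in> S"
  proof (rule ccontr)
    assume "X2 \<notin> S"
    then show False
      using tight_dominates[OF S, of X2] tight_gadget_free[OF S, of 1] S Ua
      by (auto simp: mem_vert adj_simps tight_def)
  qed
  show False using tight_unique[OF S, of Ua X1 X2] X1 X2 by (auto simp: anchors_def adj_simps)
qed

(* Hence nothing in S could dominate the hub. *)
lemma no_tight: "\<not> tight a s S"
proof
  assume S: "tight a s S"
  have Y0: "Y0 \<notin> S" using tight_Y0_free[OF S] .
  have X: "X1 \<notin> S" "X2 \<notin> S" using tight_Y0_if_X[OF S] Y0 by auto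
  obtain u where u: "u \<in> S" "adj a s Hub u"
    using tight_dominates[OF S, of Hub] by (auto simp: mem_vert)
  then show False
    using S Y0 X tight_pairs_free[OF S Y0] tight_gadget_free[OF S] by (auto simp: adj_simps tight_def)
qed

lemma tds_card_ge:
  assumes S: "total_dominating (vert a s) (adj a s) S"
  shows "9 + 2*s \<le> card S"
proof (rule ccontr)
  assume "\<not> 9 + 2*s \<le> card S"
  then have small: "card S \<le> card (anchors s)" by (simp add: card_anchors)
  have fin: "finite (vert a s)" by (simp add: vert_def)
  note tightness = disjoint_nbhds_tight[OF fin S anchors_subset anchors_disjoint_nbhds small]
  have "Hub \<notin> S" using tightness(1) by (auto simp: anchors_def adj_simps)
  then have "tight a s S" using S tightness(2) by (simp add: tight_def)
  then show False using no_tight by blast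
qed

lemma gamma_t_G: "gamma_t (vert a s) (adj a s) = 9 + 2*s"
proof (rule gamma_t_eqI)
  show "total_dominating (vert a s) (adj a s) (insert Y0 (anchors s))"
    unfolding total_dominating_def
  proof (intro conjI ballI)
    fix z assume "z \<in> vert a s"
    then show "\<exists>u\<in>insert Y0 (anchors s). adj a s z u"
      by (cases z) (auto simp: anchors_def mem_vert adj_simps)
  qed (auto simp: anchors_def vert_def)
  have "Y0 \<notin> anchors s" by (auto simp: anchors_def)
  then show "card (insert Y0 (anchors s)) = 9 + 2*s"
    by (simp add: finite_anchors card_anchors)
qed (simp_all add: vert_def tds_card_ge)

lemma exchange_witness:
  assumes "K \<subseteq> anchors s" "card L \<le> card K"
    and "L \<union> (anchors s - K) \<subseteq> vert a s - {v}"
    and "\<forall>z \<in> vert a s. z \<noteq> v \<longrightarrow> (\<exists>t \<in> L \<union> (anchors s - K). adj a s z t)"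
  shows "\<exists>K L. K \<subseteq> anchors s \<and> card L \<le> card K \<and>
    total_dominating (vert a s - {v}) (del_vertex_edges (adj a s) v) (L \<union> (anchors s - K))"
  using assms by (intro exI[of _ K] exI[of _ L]) (auto simp: total_dominating_del_vertex)

lemma deletion_witness:
  assumes a: "0 < a" and v: "v \<in> vert a s"
  shows "\<exists>K L. K \<subseteq> anchors s \<and> card L \<le> card K \<and>
    total_dominating (vert a s - {v}) (del_vertex_edges (adj a s) v) (L \<union> (anchors s - K))"
proof (cases v)
  case Hub then show ?thesis using a v
    by (intro exchange_witness[of "{}" _ "{}"]) (auto simp: ball_vert anchors_def mem_vert adj_simps)
next
  case X1 then show ?thesis using a v
    by (intro exchange_witness[of "{Ua, Wa, U 1, Ub}" _ "{Y0, X2, Q 1, Qb 0}"]) (auto simp: ball_vert anchors_def mem_vert adj_simps)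
next
  case X2 then show ?thesis using a v
    by (intro exchange_witness[of "{Ua, Wa, U 0, Ub}" _ "{Y0, X1, Q 0, Qb 0}"]) (auto simp: ball_vert anchors_def mem_vert adj_simps)
next
  case Y0 then show ?thesis using a v
    by (intro exchange_witness[of "{Wa}" _ "{X1}"]) (auto simp: ball_vert anchors_def mem_vert adj_simps)
next
  case Ua then show ?thesis using a v
    by (intro exchange_witness[of "{Ua, Wa}" _ "{Hub, Y0}"]) (auto simp: ball_vert anchors_def mem_vert adj_simps)
next
  case Wa then show ?thesis using a v
    by (intro exchange_witness[of "{Ua, Wa}" _ "{Hub, X1}"]) (auto simp: ball_vert anchors_def mem_vert adj_simps)
next
  case Ub then show ?thesis using a v
    by (intro exchange_witness[of "{Ub, Wb}" _ "{Hub, Qb 0}"]) (auto simp: ball_vert anchors_def mem_vert adj_simps)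
next
  case Wb then show ?thesis using a v
    by (intro exchange_witness[of "{Ub, Wb}" _ "{Hub, Pb 0}"]) (auto simp: ball_vert anchors_def mem_vert adj_simps)
next
  case (Pb i) then show ?thesis using a v
    by (intro exchange_witness[of "{Ub}" _ "{Qb i}"]) (auto simp: ball_vert anchors_def mem_vert adj_simps)
next
  case (Qb i) then show ?thesis using a v
    by (intro exchange_witness[of "{Wb}" _ "{Pb i}"]) (auto simp: ball_vert anchors_def mem_vert adj_simps)
next
  case (U j) then show ?thesis using a v
    by (intro exchange_witness[of "{U j, W j}" _ "{Hub, Q j}"]) (auto simp: ball_vert anchors_def mem_vert adj_simps)
next
  case (W j) then show ?thesis using a v
    by (intro exchange_witness[of "{U j, W j}" _ "{Hub, P j}"]) (auto simp: ball_vert anchors_def mem_vert adj_simps)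
next
  case (P j) then show ?thesis using a v
    by (intro exchange_witness[of "{U j}" _ "{Q j}"]) (auto simp: ball_vert anchors_def mem_vert adj_simps)
next
  case (Q j) then show ?thesis using a v
    by (intro exchange_witness[of "{W j}" _ "{P j}"]) (auto simp: ball_vert anchors_def mem_vert adj_simps)
qed

lemma gamma_t_deletion_G:
  assumes "0 < a" "v \<in> vert a s"
  shows "gamma_t (vert a s - {v}) (del_vertex_edges (adj a s) v) < gamma_t (vert a s) (adj a s)"
proof -
  obtain K L where KL: "K \<subseteq> anchors s" "card L \<le> card K"
    and td: "total_dominating (vert a s - {v}) (del_vertex_edges (adj a s) v) (L \<union> (anchors s - K))"
    using deletion_witness[OF assms] by blast
  have "gamma_t (vert a s - {v}) (del_vertex_edges (adj a s) v) \<le> card (L \<union> (anchors s - K))"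
    using td by (intro gamma_t_le) (simp_all add: vert_def)
  also have "\<dots> \<le> card (anchors s)" using card_exchange_le[OF finite_anchors KL] .
  finally show ?thesis by (simp add: card_anchors gamma_t_G)
qed

lemma degree_Hub: "degree (vert a s) (adj a s) Hub = 7 + 2*a + 2*s"
proof -
  have "{u \<in> vert a s. adj a s Hub u} =
      {X1, X2, Y0} \<union> Pb ` {..<a} \<union> Qb ` {..<a} \<union> P ` {..<s+2} \<union> Q ` {..<s+2}"
    by (auto simp: adj_simps mem_vert)
  moreover have "card ({X1, X2, Y0} \<union> Pb ` {..<a} \<union> Qb ` {..<a} \<union> P ` {..<s+2} \<union> Q ` {..<s+2})
      = 7 + 2*a + 2*s"
    apply (simp add: card_insert_if image_iff)
    apply (subst card_Un_disjoint, simp, simp, blast)+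
    apply (simp add: card_image inj_on_def)
    done
  ultimately show ?thesis by (simp add: degree_def)
qed

definition pair_side :: "nat \<Rightarrow> vtx set" where
  "pair_side a = {Hub, Y0, Wa, Ub, Wb} \<union> Pb ` {..<a} \<union> Qb ` {..<a}"

lemma card_pair_side: "card (pair_side a) \<le> 5 + 2*a"
proof -
  have "card (pair_side a) \<le> card {Hub, Y0, Wa, Ub, Wb} + card (Pb ` {..<a}) + card (Qb ` {..<a})"
    using card_Un_le[of "{Hub, Y0, Wa, Ub, Wb} \<union> Pb ` {..<a}" "Qb ` {..<a}"]
      card_Un_le[of "{Hub, Y0, Wa, Ub, Wb}" "Pb ` {..<a}"]
    unfolding pair_side_def by linarith
  also have "\<dots> = 5 + 2*a" by (simp add: card_image inj_on_def)
  finally show ?thesis .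
qed

lemma degree_non_hub:
  assumes "v \<noteq> Hub"
  shows "degree (vert a s) (adj a s) v \<le> 5 + 2*a"
proof -
  have side: ?thesis if "\<And>u. adj a s v u \<Longrightarrow> u \<in> pair_side a"
    using degree_le_card[of "pair_side a" "vert a s" "adj a s" v] that card_pair_side[of a]
    by (simp add: pair_side_def)
  have small: ?thesis if "\<And>u. adj a s v u \<Longrightarrow> u \<in> {x1, x2, x3, x4}" for x1 x2 x3 x4
    using degree_le_four[of "vert a s" "adj a s" v x1 x2 x3 x4] that by simp
  show ?thesis
  proof (cases v)
    case X1 then show ?thesis by (intro small[of Hub Ua "P 0" "Q 0"]) (auto simp: adj_simps)
  next
    case X2 then show ?thesis by (intro small[of Hub Ua "P 1" "Q 1"]) (auto simp: adj_simps)
  next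
    case Ua then show ?thesis by (intro small[of Wa X1 X2 X2]) (auto simp: adj_simps)
  next
    case Wa then show ?thesis by (intro small[of Ua Y0 Y0 Y0]) (auto simp: adj_simps)
  next
    case (U j) then show ?thesis by (intro small[of "W j" "P j" "P j" "P j"]) (auto simp: adj_simps)
  next
    case (W j) then show ?thesis by (intro small[of "U j" "Q j" "Q j" "Q j"]) (auto simp: adj_simps)
  next
    case (P j) then show ?thesis by (intro small[of Hub "U j" X1 X2]) (auto simp: adj_simps)
  next
    case (Q j) then show ?thesis by (intro small[of Hub "W j" X1 X2]) (auto simp: adj_simps)
  next
    case Y0 then show ?thesis by (intro side) (auto simp: adj_simps pair_side_def)
  next
    case Ub then show ?thesis by (intro side) (auto simp: adj_simps pair_side_def)
  next
    case Wb then show ?thesis by (intro side) (auto simp: adj_simps pair_side_def)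
  next
    case (Pb i) then show ?thesis by (intro side) (auto simp: adj_simps pair_side_def)
  next
    case (Qb i) then show ?thesis by (intro side) (auto simp: adj_simps pair_side_def)
  qed (use assms in simp)
qed

(* Every vertex has two distinct neighbours (here a > 0 is needed for Ub and Wb). *)
lemma degree_ge:
  assumes a: "0 < a" and v: "v \<in> vert a s"
  shows "2 \<le> degree (vert a s) (adj a s) v"
proof -
  have two: "2 \<le> degree (vert a s) (adj a s) v"
    if "x \<in> vert a s" "y \<in> vert a s" "x \<noteq> y" "adj a s v x" "adj a s v y" for x y
    using two_le_degree[of "vert a s" x y "adj a s" v] that by (simp add: vert_def)
  show ?thesis
  proof (cases v)
    case Hub then show ?thesis by (intro two[of X1 X2]) (auto simp: adj_simps mem_vert)
  next
    case X1 then show ?thesis by (intro two[of Hub Ua]) (auto simp: adj_simps mem_vert)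
  next
    case X2 then show ?thesis by (intro two[of Hub Ua]) (auto simp: adj_simps mem_vert)
  next
    case Y0 then show ?thesis by (intro two[of Hub Wa]) (auto simp: adj_simps mem_vert)
  next
    case Ua then show ?thesis by (intro two[of Wa X1]) (auto simp: adj_simps mem_vert)
  next
    case Wa then show ?thesis by (intro two[of Ua Y0]) (auto simp: adj_simps mem_vert)
  next
    case Ub then show ?thesis using a by (intro two[of Wb "Pb 0"]) (auto simp: adj_simps mem_vert)
  next
    case Wb then show ?thesis using a by (intro two[of Ub "Qb 0"]) (auto simp: adj_simps mem_vert)
  next
    case (Pb i) then show ?thesis using v by (intro two[of Hub Ub]) (auto simp: adj_simps mem_vert)
  next
    case (Qb i) then show ?thesis using v by (intro two[of Hub Wb]) (auto simp: adj_simps mem_vert)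
  next
    case (U j) then show ?thesis using v by (intro two[of "W j" "P j"]) (auto simp: adj_simps mem_vert)
  next
    case (W j) then show ?thesis using v by (intro two[of "U j" "Q j"]) (auto simp: adj_simps mem_vert)
  next
    case (P j) then show ?thesis using v by (intro two[of Hub "U j"]) (auto simp: adj_simps mem_vert)
  next
    case (Q j) then show ?thesis using v by (intro two[of Hub "W j"]) (auto simp: adj_simps mem_vert)
  qed
qed

lemma max_degree_G: "max_degree (vert a s) (adj a s) = 7 + 2*a + 2*s"
  unfolding max_degree_def
proof (rule Max_eqI)
  show "finite (degree (vert a s) (adj a s) ` vert a s)" by (simp add: vert_def)
  show "d \<le> 7 + 2*a + 2*s" if d: "d \<in> degree (vert a s) (adj a s) ` vert a s" for d
  proof -
    obtain v where "d = degree (vert a s) (adj a s) v" using d by blast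
    then show ?thesis using degree_Hub degree_non_hub[of v a s] by (cases "v = Hub") auto
  qed
  show "7 + 2*a + 2*s \<in> degree (vert a s) (adj a s) ` vert a s"
    using degree_Hub[of a s] by (metis image_eqI insertI1 vert_def UnI1)
qed

lemma min_degree_G: "0 < a \<Longrightarrow> 2 \<le> min_degree (vert a s) (adj a s)"
  unfolding min_degree_def using degree_ge[of a] by (subst Min_ge_iff) (auto simp: vert_def)

lemma vertex_critical_G: "0 < a \<Longrightarrow> vertex_critical (vert a s) (adj a s)"
  unfolding vertex_critical_def
  using no_isolated_if_min_degree[of "vert a s" "adj a s"] min_degree_G[of a s] gamma_t_deletion_G[of a]
  by (simp add: vert_def)

theorem mainTheorem8:
  fixes m D :: nat
  assumes "odd m" and "m \<ge> 9" and "odd D" and "D \<ge> m"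
  shows "\<exists>(V :: nat set) E. simple_graph V E \<and> m_gamma_t_critical m V E \<and>
           card V = D + m \<and> max_degree V E = D \<and> min_degree V E \<ge> 2"
proof -
  obtain k l where k: "m = 2*k + 1" and l: "D = 2*l + 1"
    using \<open>odd m\<close> \<open>odd D\<close> by (meson oddE)
  define s where "s = k - 4"
  define a where "a = l - k + 1"
  have ms: "m = 9 + 2*s" and Da: "D = 7 + 2*a + 2*s" and a: "0 < a"
    using assms(2,4) k l by (auto simp: s_def a_def)
  obtain V :: "nat set" and E where "simple_graph V E" "vertex_critical V E"
    "gamma_t V E = 9 + 2*s" "card V = 16 + 2*a + 4*s"
    "max_degree V E = 7 + 2*a + 2*s" "min_degree V E = min_degree (vert a s) (adj a s)"
    using nat_copy[OF simple_graph_G vertex_critical_G[OF a]]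
    by (metis card_vert gamma_t_G max_degree_G)
  then show ?thesis using min_degree_G[OF a] ms Da
    by (intro exI[of _ V] exI[of _ E]) (auto simp: m_gamma_t_critical_def vertex_critical_gamma_t_critical)
qed

end
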